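(* Let $b_\omega$ be a highest weight element of the spinor crystal $B_S$ (i.e. $b_\omega=b_{\Lambda_{n-1}}$ or $b_\omega=b_{\Lambda_n}$). Let $i_1,\dots,i_m\in I$ be such that $\tilde f_{i_m}\cdots\tilde f_{i_2}\tilde f_{i_1}b_\omega\neq0$. Let $\Phi:B(\infty)\hookrightarrow B(\infty)\otimes B_{i_1}\otimes\cdots\otimes B_{i_m}$ be the composition $\Phi=(\Psi_{i_1}\otimes1)\circ\cdots\circ(\Psi_{i_{m-1}}\otimes 1)\circ\Psi_{i_m}$ (first $\Psi_{i_m}:B(\infty)\to B(\infty)\otimes B_{i_m}$, then $\Psi_{i_{m-1}}$ applied to the $B(\infty)$ factor, etc.). Then $$\Phi(\tilde f^*_{i_m}\cdots\tilde f^*_{i_2}\tilde f^*_{i_1}b_\infty)=b_\infty\otimes b_{i_1}(-1)\otimes b_{i_2}(-1)\otimes\cdots\otimes b_{i_m}(-1)$$ and $$\Phi(\tilde f_{i_1}\tilde f_{i_2}\cdots\tilde f_{i_m}b_\infty)=b_\infty\otimes b_{i_1}(-1)\otimes b_{i_2}(-1)\otimes\cdots\otimes b_{i_m}(-1).$$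
   Context: Let $\mathfrak g$ be of type $D_n$ with index set $I=\{1,\dots,n\}$, simple roots $\alpha_j=\epsilon_j-\epsilon_{j+1}$ ($j<n$), $\alpha_n=\epsilon_{n-1}+\epsilon_n$. The spinor crystal $B_S$ is the set of sign vectors $(i_1,\dots,i_n)$ with weight $\frac12\sum i_j\epsilon_j$; for $j<n$, $\tilde f_j$ turns $(i_j,i_{j+1})=(+,-)$ into $(-,+)$ (else $0$), $\tilde e_j$ the reverse; $\tilde f_n$ turns $(i_{n-1},i_n)=(+,+)$ into $(-,-)$ (else $0$), $\tilde e_n$ the reverse; its highest weight elements are $b_{\Lambda_{n-1}}=(+,\dots,+,-)$ and $b_{\Lambda_n}=(+,\dots,+)$. (Generalized) crystals: sets with $\mathrm{wt},\varepsilon_i,\varphi_i\in\mathbb Z\sqcup\{-\infty\}$, $\tilde e_i,\tilde f_i$ satisfying Kashiwara's axioms; tensor product: $\mathrm{wt}$ adds, $\varepsilon_i(a\otimes b)=\max(\varepsilon_i(a),\varepsilon_i(b)-\langle\mathrm{wt}\,a,\alpha_i^\vee\rangle)$, $\varphi_i(a\otimes b)=\max(\varphi_i(b),\varphi_i(a)+\langle\mathrm{wt}\,b,\alpha_i^\vee\rangle)$, $\tilde e_i(a\otimes b)=a\otimes\tilde e_ib$ if $\varepsilon_i(b)>\varphi_i(a)$, else $\tilde e_ia\otimes b$; $\tilde f_i(a\otimes b)=a\otimes\tilde f_ib$ if $\varepsilon_i(b)\ge\varphi_i(a)$, else $\tilde f_ia\otimes b$. $B(\infty)$ is Kashiwara's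 crystal of $U_q^-(\mathfrak g)$ with weight-$0$ element $b_\infty$, $\varepsilon_i(b)=\max\{k:\tilde e_i^kb\ne0\}$, $\varphi_i(b)=\varepsilon_i(b)+\langle\alpha_i^\vee,\mathrm{wt}\, b\rangle$; $*$ is Kashiwara's involution on $B(\infty)$ and $\tilde f_i^*(b)=(\tilde f_i(b^* ))^*$. For $i\in I$, $B_i=\{b_i(k):k\in\mathbb Z\}$ with $\mathrm{wt}(b_i(k))=k\alpha_i$, $\varphi_i(b_i(k))=k$, $\varepsilon_i(b_i(k))=-k$, $\varphi_j=\varepsilon_j=-\infty$ for $j\neq i$, $\tilde e_ib_i(k)=b_i(k+1)$, $\tilde f_ib_i(k)=b_i(k-1)$, $\tilde e_j=\tilde f_j=0$ for $j\ne i$. $\Psi_i:B(\infty)\hookrightarrow B(\infty)\otimes B_i$ is Kashiwara's unique strict crystal embedding with $\Psi_i(b_\infty)=b_\infty\otimes b_i(0)$. *)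

theory Defs
  imports Main
begin

text \<open>Weights of B(infinity) and of B_i lie in the root lattice Q;
 they are represented by their coefficient functions with respect to the simple roots
 alpha_1, ..., alpha_n (a function nat => int, zero outside {1..n}).\<close>

definition adjD :: "nat \<Rightarrow> nat \<Rightarrow> nat \<Rightarrow> bool" where
  "adjD n i j \<longleftrightarrow> i \<in> {1..n} \<and> j \<in> {1..n} \<and>
     ((i + 1 = j \<and> j \<le> n - 1) \<or> (j + 1 = i \<and> i \<le> n - 1) \<or>
      (i + 2 = n \<and> j = n) \<or> (j + 2 = n \<and> i = n))"

definition cartanD :: "nat \<Rightarrow> nat \<Rightarrow> nat \<Rightarrow> int" where
  "cartanD n i j = (if i = j then 2 else if adjD n i j then -1 else 0)"

definition pairD :: "nat \<Rightarrow> nat \<Rightarrow> (nat \<Rightarrow> int) \<Rightarrow> int" where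
  "pairD n i mu = (\<Sum>j\<in>{1..n}. cartanD n i j * mu j)"

definition add_root :: "(nat \<Rightarrow> int) \<Rightarrow> int \<Rightarrow> nat \<Rightarrow> (nat \<Rightarrow> int)" where
  "add_root mu k i = (\<lambda>j. mu j + (if j = i then k else 0))"

section \<open>Iteration of partial crystal operators (None = 0)\<close>

definition iter_opt :: "('a \<Rightarrow> 'a option) \<Rightarrow> nat \<Rightarrow> 'a \<Rightarrow> 'a option" where
  "iter_opt g k x = ((\<lambda>y. Option.bind y g) ^^ k) (Some x)"

definition int_crystal ::
  "nat \<Rightarrow> ('b \<Rightarrow> nat \<Rightarrow> int) \<Rightarrow> (nat \<Rightarrow> 'b \<Rightarrow> int) \<Rightarrow> (nat \<Rightarrow> 'b \<Rightarrow> int)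
   \<Rightarrow> (nat \<Rightarrow> 'b \<Rightarrow> 'b option) \<Rightarrow> (nat \<Rightarrow> 'b \<Rightarrow> 'b option) \<Rightarrow> bool" where
  "int_crystal n wt eps phi e f \<longleftrightarrow>
     (\<forall>i\<in>{1..n}. \<forall>b. phi i b = eps i b + pairD n i (wt b)) \<and>
     (\<forall>i\<in>{1..n}. \<forall>b b'. e i b = Some b' \<longrightarrow>
        wt b' = add_root (wt b) 1 i \<and> eps i b' = eps i b - 1 \<and> phi i b' = phi i b + 1) \<and>
     (\<forall>i\<in>{1..n}. \<forall>b b'. f i b = Some b' \<longrightarrow>
        wt b' = add_root (wt b) (-1) i \<and> eps i b' = eps i b + 1 \<and> phi i b' = phi i b - 1) \<and>
     (\<forall>i\<in>{1..n}. \<forall>b b'. f i b = Some b' \<longleftrightarrow> e i b' = Some b)"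

section \<open>The tensor product B \<otimes> B_i; b \<otimes> b_i(k) is represented by (b, k)\<close>

definition tens_wt :: "('b \<Rightarrow> nat \<Rightarrow> int) \<Rightarrow> nat \<Rightarrow> 'b \<times> int \<Rightarrow> nat \<Rightarrow> int" where
  "tens_wt wt i x = add_root (wt (fst x)) (snd x) i"

text \<open>epsilon_j(a \<otimes> b_i(k)) = max(eps_j a, eps_j(b_i(k)) - <wt a, alpha_j^vee>), where
  eps_j(b_i(k)) = -infinity for j \<noteq> i.\<close>
definition tens_eps :: "nat \<Rightarrow> ('b \<Rightarrow> nat \<Rightarrow> int) \<Rightarrow> (nat \<Rightarrow> 'b \<Rightarrow> int) \<Rightarrow> nat \<Rightarrow> nat \<Rightarrow> 'b \<times> int \<Rightarrow> int" where
  "tens_eps n wt eps i j x =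
     (if j = i then max (eps i (fst x)) (- snd x - pairD n i (wt (fst x))) else eps j (fst x))"

text \<open>phi_j(a \<otimes> b_i(k)) = max(phi_j(b_i(k)), phi_j a + <wt b_i(k), alpha_j^vee>).\<close>
definition tens_phi :: "nat \<Rightarrow> (nat \<Rightarrow> 'b \<Rightarrow> int) \<Rightarrow> nat \<Rightarrow> nat \<Rightarrow> 'b \<times> int \<Rightarrow> int" where
  "tens_phi n phi i j x =
     (if j = i then max (snd x) (phi i (fst x) + 2 * snd x)
      else phi j (fst x) + snd x * cartanD n j i)"

definition tens_e :: "(nat \<Rightarrow> 'b \<Rightarrow> int) \<Rightarrow> (nat \<Rightarrow> 'b \<Rightarrow> 'b option) \<Rightarrow> nat \<Rightarrow> nat \<Rightarrow> 'b \<times> int \<Rightarrow> ('b \<times> int) option" where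
  "tens_e phi e i j x =
     (if j = i \<and> - snd x > phi i (fst x) then Some (fst x, snd x + 1)
      else map_option (\<lambda>a. (a, snd x)) (e j (fst x)))"

definition tens_f :: "(nat \<Rightarrow> 'b \<Rightarrow> int) \<Rightarrow> (nat \<Rightarrow> 'b \<Rightarrow> 'b option) \<Rightarrow> nat \<Rightarrow> nat \<Rightarrow> 'b \<times> int \<Rightarrow> ('b \<times> int) option" where
  "tens_f phi f i j x =
     (if j = i \<and> - snd x \<ge> phi i (fst x) then Some (fst x, snd x - 1)
      else map_option (\<lambda>a. (a, snd x)) (f j (fst x)))"

definition strict_emb ::
  "nat \<Rightarrow> ('b \<Rightarrow> nat \<Rightarrow> int) \<Rightarrow> (nat \<Rightarrow> 'b \<Rightarrow> int) \<Rightarrow> (nat \<Rightarrow> 'b \<Rightarrow> int)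
   \<Rightarrow> (nat \<Rightarrow> 'b \<Rightarrow> 'b option) \<Rightarrow> (nat \<Rightarrow> 'b \<Rightarrow> 'b option) \<Rightarrow> nat \<Rightarrow> ('b \<Rightarrow> 'b \<times> int) \<Rightarrow> bool" where
  "strict_emb n wt eps phi e f i Psi \<longleftrightarrow>
     inj Psi \<and>
     (\<forall>b. tens_wt wt i (Psi b) = wt b) \<and>
     (\<forall>j\<in>{1..n}. \<forall>b.
        tens_eps n wt eps i j (Psi b) = eps j b \<and>
        tens_phi n phi i j (Psi b) = phi j b \<and>
        tens_e phi e i j (Psi b) = map_option Psi (e j b) \<and>
        tens_f phi f i j (Psi b) = map_option Psi (f j b))"

text \<open>(B, b_inf, eps, phi, e, f) satisfies the Kashiwara--Saito characterization of B(infinity)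
  (Kashiwara--Saito 1997, Prop. 3.2.3), with Psi_i the strict embeddings B \<hookrightarrow> B \<otimes> B_i,
  Psi_i(b_inf) = b_inf \<otimes> b_i(0); eps_i(b) = max{k. e_i^k b \<noteq> 0}; and star is an
  involution fixing b_inf with Kashiwara's formula
  Psi_i(b) = (e_i^* )^{eps_i^*(b)} b \<otimes> b_i(-eps_i^*(b)),  eps_i^*(b) = eps_i(b^*),
  which (given Psi_i) determines star uniquely; hence these data are exactly
  (B(infinity), *, Psi_i) up to isomorphism.\<close>
definition is_Binf_D ::
  "nat \<Rightarrow> ('b \<Rightarrow> nat \<Rightarrow> int) \<Rightarrow> (nat \<Rightarrow> 'b \<Rightarrow> int) \<Rightarrow> (nat \<Rightarrow> 'b \<Rightarrow> int)
   \<Rightarrow> (nat \<Rightarrow> 'b \<Rightarrow> 'b option) \<Rightarrow> (nat \<Rightarrow> 'b \<Rightarrow> 'b option) \<Rightarrow> 'b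
   \<Rightarrow> ('b \<Rightarrow> 'b) \<Rightarrow> (nat \<Rightarrow> 'b \<Rightarrow> 'b \<times> int) \<Rightarrow> bool" where
  "is_Binf_D n wt eps phi e f binf star Psi \<longleftrightarrow>
     int_crystal n wt eps phi e f \<and>
     (\<forall>b. \<forall>j. j \<notin> {1..n} \<longrightarrow> wt b j = 0) \<and>
     (\<forall>b. \<forall>j. wt b j \<le> 0) \<and>
     (\<forall>b. wt b = (\<lambda>_. 0) \<longleftrightarrow> b = binf) \<and>
     (\<forall>i\<in>{1..n}. eps i binf = 0) \<and>
     (\<forall>i\<in>{1..n}. \<forall>b. eps i b \<ge> 0 \<and> iter_opt (e i) (nat (eps i b)) b \<noteq> None
                        \<and> iter_opt (e i) (nat (eps i b) + 1) b = None) \<and>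
     (\<forall>i\<in>{1..n}. strict_emb n wt eps phi e f i (Psi i) \<and> Psi i binf = (binf, 0)) \<and>
     (\<forall>i\<in>{1..n}. \<forall>b. snd (Psi i b) \<le> 0) \<and>
     (\<forall>b. b \<noteq> binf \<longrightarrow> (\<exists>i\<in>{1..n}. snd (Psi i b) < 0)) \<and>
     (\<forall>b. star (star b) = b) \<and> star binf = binf \<and>
     (\<forall>i\<in>{1..n}. \<forall>b. snd (Psi i b) = - eps i (star b) \<and>
        iter_opt (f i) (nat (eps i (star b))) (star (fst (Psi i b))) = Some (star b))"

definition fstar :: "(nat \<Rightarrow> 'b \<Rightarrow> 'b option) \<Rightarrow> ('b \<Rightarrow> 'b) \<Rightarrow> nat \<Rightarrow> 'b \<Rightarrow> 'b option" where
  "fstar f star i b = map_option star (f i (star b))"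

text \<open>f^*_{i_m} ... f^*_{i_1} b  (f^*_{i_1} applied first)\<close>
definition fstar_seq :: "(nat \<Rightarrow> 'b \<Rightarrow> 'b option) \<Rightarrow> ('b \<Rightarrow> 'b) \<Rightarrow> nat list \<Rightarrow> 'b \<Rightarrow> 'b option" where
  "fstar_seq f star js b = foldl (\<lambda>x i. Option.bind x (fstar f star i)) (Some b) js"

text \<open>f_{i_1} f_{i_2} ... f_{i_m} b  (f_{i_m} applied first)\<close>
definition f_seq :: "(nat \<Rightarrow> 'b \<Rightarrow> 'b option) \<Rightarrow> nat list \<Rightarrow> 'b \<Rightarrow> 'b option" where
  "f_seq f js b = foldr (\<lambda>i x. Option.bind x (f i)) js (Some b)"

text \<open>Phi = (Psi_{i_1} \<otimes> 1) o ... o (Psi_{i_{m-1}} \<otimes> 1) o Psi_{i_m};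
  Phi b = (b', [k_1,...,k_m]) stands for b' \<otimes> b_{i_1}(k_1) \<otimes> ... \<otimes> b_{i_m}(k_m).\<close>
fun Phi :: "(nat \<Rightarrow> 'b \<Rightarrow> 'b \<times> int) \<Rightarrow> nat list \<Rightarrow> 'b \<Rightarrow> 'b \<times> int list" where
  "Phi Psi [] b = (b, [])"
| "Phi Psi (i # js) b = (let (b1, ks) = Phi Psi js b; (b2, k) = Psi i b1 in (b2, k # ks))"

section \<open>Spinor crystal B_S: sign vectors as bool lists of length n (True = +)\<close>

definition spin_f :: "nat \<Rightarrow> nat \<Rightarrow> bool list \<Rightarrow> bool list option" where
  "spin_f n i v =
     (if 1 \<le> i \<and> i < n then
        (if v ! (i - 1) \<and> \<not> v ! i then Some (v[i - 1 := False, i := True]) else None)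
      else if i = n then
        (if v ! (n - 2) \<and> v ! (n - 1) then Some (v[n - 2 := False, n - 1 := False]) else None)
      else None)"

text \<open>f_{i_m} ... f_{i_1} v  (f_{i_1} applied first)\<close>
definition spin_fseq :: "nat \<Rightarrow> nat list \<Rightarrow> bool list \<Rightarrow> bool list option" where
  "spin_fseq n js v = foldl (\<lambda>x i. Option.bind x (spin_f n i)) (Some v) js"

end

theory Submission
  imports Defs
begin

text \<open>The spinor crystal is minuscule: its i-strings have length at most one, so
  \<open>\<langle>\<alpha>\<^sub>i\<^sup>\<or>, wt\<rangle>\<close> is 1 wherever \<open>f\<^sub>i\<close> acts, -1 right after it, and must climb back to 1 before the
  next \<open>f\<^sub>i\<close>. Hence the letters j strictly between two occurrences of i in an admissible word
  satisfy \<open>\<Sum> a\<^sub>i\<^sub>j = -2\<close>. In \<open>B(\<infinity>)\<close> this gives \<open>\<phi>\<^sub>i \<ge> 2\<close> at every application of \<open>f\<^sub>i\<close> but the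
  first, so in \<open>B(\<infinity>) \<otimes> B\<^sub>i\<close> the tensor rule sends it to the left factor and
  \<open>\<Psi>\<^sub>i(f\<^sub>w f\<^sub>i b\<^sub>\<infinity>) = f\<^sub>w b\<^sub>\<infinity> \<otimes> b\<^sub>i(-1)\<close>; peeling off the letters one at a time gives the second
  identity. For the first, Kashiwara's formula \<open>\<Psi>\<^sub>i(b) = (e\<^sub>i\<^sup>*)\<^bsup>\<epsilon>\<^sub>i\<^sup>*(b)\<^esup> b \<otimes> b\<^sub>i(-\<epsilon>\<^sub>i\<^sup>*(b))\<close>
  reduces the claim to \<open>\<epsilon>\<^sub>i(f\<^sub>w b\<^sub>\<infinity>) = 0\<close> whenever \<open>i w\<close> is admissible, which the same
  estimate gives.\<close>

definition spin_sign :: "bool list \<Rightarrow> nat \<Rightarrow> int" where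
  "spin_sign v k = (if v ! k then 1 else -1)"

text \<open>Twice the pairing \<open>\<langle>\<alpha>\<^sub>i\<^sup>\<or>, wt v\<rangle>\<close>, as \<open>2 wt v = \<Sum>\<^sub>k spin_sign v (k - 1) \<epsilon>\<^sub>k\<close>.\<close>
definition spin_pair :: "nat \<Rightarrow> nat \<Rightarrow> bool list \<Rightarrow> int" where
  "spin_pair n i v =
     (if i < n then spin_sign v (i - 1) - spin_sign v i
      else spin_sign v (n - 2) + spin_sign v (n - 1))"

lemma spin_pair_if_spin_f:
  assumes "i \<in> {1..n}" and "spin_f n i v \<noteq> None"
  shows "spin_pair n i v = 2"
  using assms by (auto simp: spin_f_def spin_pair_def spin_sign_def split: if_splits)

lemma length_spin_f: "spin_f n j v = Some v' \<Longrightarrow> length v' = length v"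
  by (auto simp: spin_f_def split: if_splits)

lemma spin_pair_update:
  assumes "n \<ge> 2" and "length v = n" and "i \<in> {1..n}" and "j \<in> {1..<n}"
    and "v ! (j - 1)" and "\<not> v ! j"
  shows "spin_pair n i (v[j - 1 := False, j := True]) = spin_pair n i v - 2 * cartanD n i j"
proof -
  obtain m where m: "n = Suc (Suc m)" using assms(1) by (metis add_2_eq_Suc le_Suc_ex)
  obtain c where c: "j = Suc c" using assms(4) by (cases j) auto
  show ?thesis
  proof (cases "i < n")
    case True
    obtain a where a: "i = Suc a" using assms(3) by (cases i) auto
    show ?thesis using assms True unfolding a c m
      by (cases "a = c"; cases "a = Suc c"; cases "Suc a = c")
         (auto simp: spin_pair_def spin_sign_def cartanD_def adjD_def nth_list_update)
  next
    case False
    then have i: "i = Suc (Suc m)" using assms(3) m by auto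
    show ?thesis using assms unfolding i c m
      by (cases "c = m"; cases "Suc c = m")
         (auto simp: spin_pair_def spin_sign_def cartanD_def adjD_def nth_list_update)
  qed
qed

lemma spin_pair_update_last:
  assumes "n \<ge> 2" and "length v = n" and "i \<in> {1..n}" and "v ! (n - 2)" and "v ! (n - 1)"
  shows "spin_pair n i (v[n - 2 := False, n - 1 := False]) = spin_pair n i v - 2 * cartanD n i n"
proof -
  obtain m where m: "n = Suc (Suc m)" using assms(1) by (metis add_2_eq_Suc le_Suc_ex)
  show ?thesis
  proof (cases "i < n")
    case True
    obtain a where a: "i = Suc a" using assms(3) by (cases i) auto
    show ?thesis using assms True unfolding a m
      by (cases "a = m"; cases "Suc a = m"; cases "Suc (Suc a) = m")
         (auto simp: spin_pair_def spin_sign_def cartanD_def adjD_def nth_list_update)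
  next
    case False
    then have i: "i = Suc (Suc m)" using assms(3) m by auto
    show ?thesis using assms unfolding i m
      by (auto simp: spin_pair_def spin_sign_def cartanD_def adjD_def nth_list_update)
  qed
qed

lemma spin_pair_spin_f:
  assumes "n \<ge> 2" and "length v = n" and "i \<in> {1..n}" and "j \<in> {1..n}"
    and "spin_f n j v = Some v'"
  shows "spin_pair n i v' = spin_pair n i v - 2 * cartanD n i j"
  using assms spin_pair_update[OF assms(1-3), of j] spin_pair_update_last[OF assms(1-3)]
  by (auto simp: spin_f_def split: if_splits)

lemma foldl_bind_None: "foldl (\<lambda>x i. Option.bind x (g i)) None w = None"
  by (induction w) auto

lemma spin_fseq_Cons: "spin_fseq n (j # w) v = Option.bind (spin_f n j v) (spin_fseq n w)"
  by (cases "spin_f n j v") (auto simp: spin_fseq_def foldl_bind_None)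

lemma spin_fseq_append:
  "spin_fseq n (u @ w) v = Option.bind (spin_fseq n u v) (spin_fseq n w)"
  by (cases "spin_fseq n u v") (simp_all add: spin_fseq_def foldl_bind_None)

lemma spin_pair_spin_fseq:
  assumes "n \<ge> 2" and "length v = n" and "i \<in> {1..n}" and "set w \<subseteq> {1..n}"
    and "spin_fseq n w v = Some v'"
  shows "length v' = n \<and> spin_pair n i v' = spin_pair n i v - 2 * sum_list (map (cartanD n i) w)"
  using assms(2,4,5)
proof (induction w arbitrary: v)
  case Nil
  then show ?case by (simp add: spin_fseq_def)
next
  case (Cons j w)
  then obtain u where u: "spin_f n j v = Some u" and w: "spin_fseq n w u = Some v'"
    by (cases "spin_f n j v") (auto simp: spin_fseq_Cons)
  have "length u = n" using u Cons.prems(1) by (simp add: length_spin_f)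
  then show ?case
    using Cons.IH[OF _ _ w] Cons.prems(2) spin_pair_spin_f[OF assms(1) Cons.prems(1) assms(3) _ u]
    by auto
qed

text \<open>Every word along which the \<open>f\<^sub>i\<close> act on a minuscule crystal has this property.\<close>
definition minuscule_word :: "nat \<Rightarrow> nat list \<Rightarrow> bool" where
  "minuscule_word n w \<longleftrightarrow>
     (\<forall>p i q r. w = p @ i # q @ i # r \<longrightarrow> sum_list (map (cartanD n i) q) = -2)"

lemma minuscule_word_if_spin_fseq:
  assumes "n \<ge> 2" and "length v = n" and "set w \<subseteq> {1..n}" and "spin_fseq n w v \<noteq> None"
  shows "minuscule_word n w"
  unfolding minuscule_word_def
proof (intro allI impI)
  fix p i q r
  assume w: "w = p @ i # q @ i # r"
  then have i: "i \<in> {1..n}" and q: "set q \<subseteq> {1..n}" and p: "set p \<subseteq> {1..n}"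
    using assms(3) by auto
  obtain v1 v2 v3 where v1: "spin_fseq n p v = Some v1" and v2: "spin_f n i v1 = Some v2"
    and v3: "spin_fseq n q v2 = Some v3" and v4: "spin_f n i v3 \<noteq> None"
    using assms(4) unfolding w
    by (auto simp: spin_fseq_append spin_fseq_Cons split: Option.bind_splits)
  have l1: "length v1 = n" using spin_pair_spin_fseq[OF assms(1,2) i p v1] by simp
  have "spin_pair n i v2 = spin_pair n i v1 - 4"
    using spin_pair_spin_f[OF assms(1) l1 i i v2] by (simp add: cartanD_def)
  moreover have "spin_pair n i v3 = spin_pair n i v2 - 2 * sum_list (map (cartanD n i) q)"
    using spin_pair_spin_fseq[OF assms(1) _ i q v3] l1 length_spin_f[OF v2] by simp
  ultimately show "sum_list (map (cartanD n i) q) = -2"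
    using spin_pair_if_spin_f[OF i] v2 v4 by simp
qed

lemma minuscule_word_appendD:
  assumes "minuscule_word n (u @ w)"
  shows "minuscule_word n u" and "minuscule_word n w"
proof -
  show "minuscule_word n u" unfolding minuscule_word_def
  proof (intro allI impI)
    fix p i q r
    assume "u = p @ i # q @ i # r"
    then have "u @ w = p @ i # q @ i # (r @ w)" by simp
    then show "sum_list (map (cartanD n i) q) = -2"
      using assms unfolding minuscule_word_def by blast
  qed
  show "minuscule_word n w" unfolding minuscule_word_def
  proof (intro allI impI)
    fix p i q r
    assume "w = p @ i # q @ i # r"
    then have "u @ w = (u @ p) @ i # q @ i # r" by simp
    then show "sum_list (map (cartanD n i) q) = -2"
      using assms unfolding minuscule_word_def by blast
  qed
qed

lemma minuscule_word_rev [simp]: "minuscule_word n (rev w) \<longleftrightarrow> minuscule_word n w"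
proof -
  have "minuscule_word n (rev w)" if "minuscule_word n w" for w
    unfolding minuscule_word_def
  proof (intro allI impI)
    fix p i q r
    assume "rev w = p @ i # q @ i # r"
    then have "w = rev r @ i # rev q @ i # rev p" by (simp add: rev_swap)
    then have "sum_list (map (cartanD n i) (rev q)) = -2"
      using that unfolding minuscule_word_def by blast
    then show "sum_list (map (cartanD n i) q) = -2" by (simp add: rev_map[symmetric])
  qed
  then show ?thesis by (metis rev_rev_ident)
qed

lemma pairD_add_root:
  assumes "j \<in> {1..n}"
  shows "pairD n i (add_root mu k j) = pairD n i mu + k * cartanD n i j"
proof -
  have "pairD n i (add_root mu k j) =
      pairD n i mu + (\<Sum>l\<in>{1..n}. if l = j then cartanD n i l * k else 0)"
    unfolding pairD_def add_root_def distrib_left sum.distrib[symmetric]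
    by (rule sum.cong) auto
  also have "\<dots> = pairD n i mu + k * cartanD n i j"
    using assms by simp
  finally show ?thesis .
qed

lemma Phi_snoc:
  "Phi Psi (w @ [i]) b =
     (let (b', k) = Psi i b; (b'', ks) = Phi Psi w b' in (b'', ks @ [k]))"
  by (induction w) (auto split: prod.splits)

locale Binf_D =
  fixes n :: nat and wt :: "'b \<Rightarrow> nat \<Rightarrow> int"
    and eps phi :: "nat \<Rightarrow> 'b \<Rightarrow> int"
    and e f :: "nat \<Rightarrow> 'b \<Rightarrow> 'b option"
    and binf :: 'b and star :: "'b \<Rightarrow> 'b" and Psi :: "nat \<Rightarrow> 'b \<Rightarrow> 'b \<times> int"
  assumes Binf: "is_Binf_D n wt eps phi e f binf star Psi"
begin

lemma
  shows wt_binf: "wt binf = (\<lambda>_. 0)"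
    and wt_nonpos: "wt b j \<le> 0"
    and star_star [simp]: "star (star b) = b"
    and star_binf [simp]: "star binf = binf"
  using Binf unfolding is_Binf_D_def by (elim conjE; blast)+

lemma phi_eq: "i \<in> {1..n} \<Longrightarrow> phi i b = eps i b + pairD n i (wt b)"
  using Binf unfolding is_Binf_D_def int_crystal_def by (elim conjE) blast

lemma eps_binf: "i \<in> {1..n} \<Longrightarrow> eps i binf = 0"
  using Binf unfolding is_Binf_D_def by (elim conjE) blast

lemma eps_nonneg: "i \<in> {1..n} \<Longrightarrow> eps i b \<ge> 0"
  using Binf unfolding is_Binf_D_def by (elim conjE) blast

lemma Psi_binf: "i \<in> {1..n} \<Longrightarrow> Psi i binf = (binf, 0)"
  using Binf unfolding is_Binf_D_def by (elim conjE) blast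

lemma Psi_wt: "i \<in> {1..n} \<Longrightarrow> tens_wt wt i (Psi i b) = wt b"
  using Binf unfolding is_Binf_D_def strict_emb_def by (elim conjE) blast

lemma Psi_eps:
  "i \<in> {1..n} \<Longrightarrow> j \<in> {1..n} \<Longrightarrow> tens_eps n wt eps i j (Psi i b) = eps j b"
  using Binf unfolding is_Binf_D_def strict_emb_def by (elim conjE) blast

lemma Psi_f:
  "i \<in> {1..n} \<Longrightarrow> j \<in> {1..n} \<Longrightarrow> tens_f phi f i j (Psi i b) = map_option (Psi i) (f j b)"
  using Binf unfolding is_Binf_D_def strict_emb_def by (elim conjE) blast

lemma Psi_eps_star: "i \<in> {1..n} \<Longrightarrow> snd (Psi i b) = - eps i (star b)"
  using Binf unfolding is_Binf_D_def by (elim conjE) blast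

lemma iter_f_star_Psi:
  "i \<in> {1..n} \<Longrightarrow> iter_opt (f i) (nat (eps i (star b))) (star (fst (Psi i b))) = Some (star b)"
  using Binf unfolding is_Binf_D_def by (elim conjE) blast

lemma
  assumes "i \<in> {1..n}" and "f i b = Some b'"
  shows wt_f: "wt b' = add_root (wt b) (-1) i"
    and eps_f: "eps i b' = eps i b + 1"
  using Binf assms unfolding is_Binf_D_def int_crystal_def by (elim conjE; blast)+

lemma f_inj:
  assumes "i \<in> {1..n}" and "f i b = Some c" and "f i b' = Some c"
  shows "b = b'"
proof -
  have "\<forall>i\<in>{1..n}. \<forall>b b'. f i b = Some b' \<longleftrightarrow> e i b' = Some b"
    using Binf unfolding is_Binf_D_def int_crystal_def by (elim conjE) blast
  then show ?thesis using assms by force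
qed

lemma Psi_neg_if_ne_binf:
  assumes "b \<noteq> binf"
  obtains i where "i \<in> {1..n}" and "snd (Psi i b) < 0"
  using Binf assms unfolding is_Binf_D_def by (elim conjE) blast

lemma Psi_f_binf:
  assumes "i \<in> {1..n}"
  shows "map_option (Psi i) (f i binf) = Some (binf, -1)"
  using Psi_f[OF assms assms, of binf] assms
  by (simp add: Psi_binf phi_eq eps_binf wt_binf pairD_def tens_f_def)

lemma f_total:
  assumes "i \<in> {1..n}"
  shows "f i b \<noteq> None"
proof (induction b rule: measure_induct_rule[where f = "\<lambda>b. nat (- (\<Sum>l\<in>{1..n}. wt b l))"])
  case (less b)
  show ?case
  proof (cases "b = binf")
    case True
    then show ?thesis using Psi_f_binf[OF assms] by auto
  next
    case False
    then obtain j where j: "j \<in> {1..n}" and k: "snd (Psi j b) < 0"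
      by (rule Psi_neg_if_ne_binf)
    obtain b' k where bk: "Psi j b = (b', k)" by fastforce
    have "wt b = add_root (wt b') k j" using Psi_wt[OF j, of b] bk by (simp add: tens_wt_def)
    then have "(\<Sum>l\<in>{1..n}. wt b l) = (\<Sum>l\<in>{1..n}. wt b' l) + k"
      using j by (simp add: add_root_def sum.distrib)
    moreover have "(\<Sum>l\<in>{1..n}. wt b' l) \<le> 0" by (simp add: sum_nonpos wt_nonpos)
    ultimately have "f i b' \<noteq> None" using less k bk by simp
    then have "tens_f phi f j i (Psi j b) \<noteq> None" using bk by (simp add: tens_f_def)
    then show ?thesis using Psi_f[OF j assms] by auto
  qed
qed

text \<open>\<open>f_word [i\<^sub>1, \<dots>, i\<^sub>m] = f\<^sub>i\<^sub>1 \<cdots> f\<^sub>i\<^sub>m b\<^sub>\<infinity>\<close>; the \<open>the\<close> is harmless because the \<open>f\<^sub>i\<close> are total.\<close>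
definition f_word :: "nat list \<Rightarrow> 'b" where
  "f_word w = foldr (\<lambda>i b. the (f i b)) w binf"

lemma f_word_Nil [simp]: "f_word [] = binf"
  by (simp add: f_word_def)

lemma f_f_word: "i \<in> {1..n} \<Longrightarrow> f i (f_word w) = Some (f_word (i # w))"
  using f_total by (auto simp: f_word_def)

lemma f_seq_binf: "set w \<subseteq> {1..n} \<Longrightarrow> f_seq f w binf = Some (f_word w)"
  by (induction w) (auto simp: f_seq_def f_f_word)

lemma fstar_seq_binf:
  "set w \<subseteq> {1..n} \<Longrightarrow> fstar_seq f star w binf = Some (star (f_word (rev w)))"
  by (induction w rule: rev_induct) (auto simp: fstar_seq_def fstar_def f_f_word)

lemma pairD_wt_f_word:
  "i \<in> {1..n} \<Longrightarrow> set w \<subseteq> {1..n} \<Longrightarrow>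
     pairD n i (wt (f_word w)) = - sum_list (map (cartanD n i) w)"
proof (induction w)
  case Nil
  then show ?case by (simp add: wt_binf pairD_def)
next
  case (Cons j w)
  then show ?case
    using wt_f[OF _ f_f_word, of j w] pairD_add_root[of j n i] by simp
qed

lemma Psi_f_word:
  assumes "i \<in> {1..n}" and "set w \<subseteq> {1..n}"
    and "\<And>u v. w = u @ i # v \<Longrightarrow> sum_list (map (cartanD n i) v) \<le> -2"
  shows "Psi i (f_word (w @ [i])) = (f_word w, -1)"
  using assms(2,3)
proof (induction w)
  case Nil
  then show ?case using Psi_f_binf[OF assms(1)] f_f_word[OF assms(1), of "[]"] by simp
next
  case (Cons j w)
  have j: "j \<in> {1..n}" using Cons.prems(1) by simp
  have IH: "Psi i (f_word (w @ [i])) = (f_word w, -1)"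
  proof (rule Cons.IH)
    show "set w \<subseteq> {1..n}" using Cons.prems(1) by simp
    fix u v
    assume "w = u @ i # v"
    then show "sum_list (map (cartanD n i) v) \<le> -2" using Cons.prems(2)[of "j # u" v] by simp
  qed
  have "tens_f phi f i j (f_word w, -1) = Some (f_word (j # w), -1)"
  proof (cases "j = i")
    case True
    have "pairD n i (wt (f_word w)) \<ge> 2"
      using pairD_wt_f_word[OF assms(1)] Cons.prems True by fastforce
    then have "phi i (f_word w) > 1"
      using phi_eq[OF assms(1), of "f_word w"] eps_nonneg[OF assms(1), of "f_word w"] by linarith
    then show ?thesis using True f_f_word[OF j] by (simp add: tens_f_def)
  qed (simp add: tens_f_def f_f_word[OF j])
  then show ?case
    using Psi_f[OF assms(1) j, of "f_word (w @ [i])"] IH f_f_word[OF j] by simp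
qed

lemma Psi_f_word_minuscule:
  assumes "i \<in> {1..n}" and "set w \<subseteq> {1..n}" and "minuscule_word n (w @ [i])"
  shows "Psi i (f_word (w @ [i])) = (f_word w, -1)"
proof (rule Psi_f_word[OF assms(1,2)])
  fix u v
  assume "w = u @ i # v"
  then have "w @ [i] = u @ i # v @ i # []" by simp
  then show "sum_list (map (cartanD n i) v) \<le> -2"
    using assms(3) unfolding minuscule_word_def by fastforce
qed

lemma eps_f_word:
  assumes "i \<in> {1..n}" and "set w \<subseteq> {1..n}" and "minuscule_word n (i # w)"
  shows "eps i (f_word w) = 0"
  using assms(2,3)
proof (induction w rule: rev_induct)
  case Nil
  then show ?case using eps_binf[OF assms(1)] by simp
next
  case (snoc j w)
  have j: "j \<in> {1..n}" and w: "set w \<subseteq> {1..n}" using snoc.prems(1) by auto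
  have IH: "eps i (f_word w) = 0"
    using snoc.IH[OF w] minuscule_word_appendD(1)[of n "i # w" "[j]"] snoc.prems(2) by simp
  have "minuscule_word n (w @ [j])"
    using minuscule_word_appendD(2)[of n "[i]" "w @ [j]"] snoc.prems(2) by simp
  then have "Psi j (f_word (w @ [j])) = (f_word w, -1)"
    using Psi_f_word_minuscule[OF j w] by simp
  then have eps: "eps i (f_word (w @ [j])) = tens_eps n wt eps j i (f_word w, -1)"
    using Psi_eps[OF j assms(1), of "f_word (w @ [j])"] by simp
  show ?case
  proof (cases "j = i")
    case True
    then have "sum_list (map (cartanD n i) w) = -2"
      using snoc.prems(2) unfolding minuscule_word_def by fastforce
    then have "pairD n i (wt (f_word w)) = 2" using pairD_wt_f_word[OF assms(1) w] by simp
    then show ?thesis using eps IH True by (simp add: tens_eps_def)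
  qed (use eps IH in \<open>simp add: tens_eps_def\<close>)
qed

lemma Phi_f_word:
  assumes "set w \<subseteq> {1..n}" and "minuscule_word n w"
  shows "Phi Psi w (f_word w) = (binf, replicate (length w) (-1))"
  using assms
proof (induction w rule: rev_induct)
  case Nil
  then show ?case by simp
next
  case (snoc i w)
  have "Psi i (f_word (w @ [i])) = (f_word w, -1)"
    using Psi_f_word_minuscule snoc.prems by simp
  then show ?case
    using snoc.IH snoc.prems minuscule_word_appendD(1)
    by (simp add: Phi_snoc replicate_append_same)
qed

lemma Phi_star_f_word:
  assumes "set w \<subseteq> {1..n}" and "minuscule_word n w"
  shows "Phi Psi w (star (f_word (rev w))) = (binf, replicate (length w) (-1))"
  using assms
proof (induction w rule: rev_induct)
  case Nil
  then show ?case by simp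
next
  case (snoc i w)
  have i: "i \<in> {1..n}" and w: "set (rev w) \<subseteq> {1..n}" using snoc.prems(1) by auto
  define b where "b = star (f_word (i # rev w))"
  have f: "f i (f_word (rev w)) = Some (star b)" using f_f_word[OF i] by (simp add: b_def)
  have "minuscule_word n (i # rev w)" using snoc.prems(2) minuscule_word_rev[of n "w @ [i]"] by simp
  then have "eps i (star b) = 1"
    using eps_f_word[OF i w] eps_f[OF i f] by simp
  then have "snd (Psi i b) = -1" and "f i (star (fst (Psi i b))) = Some (star b)"
    using Psi_eps_star[OF i, of b] iter_f_star_Psi[OF i, of b] by (simp_all add: iter_opt_def)
  moreover from this(2) have "fst (Psi i b) = star (f_word (rev w))"
    using f_inj[OF i _ f] by (metis star_star)
  ultimately have "Psi i b = (star (f_word (rev w)), -1)" by (simp add: prod_eq_iff)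
  then show ?case
    using snoc.IH snoc.prems minuscule_word_appendD(1)
    by (simp add: Phi_snoc replicate_append_same b_def)
qed

end

theorem proposition10p1:
  fixes n :: nat
    and wt :: "'b \<Rightarrow> nat \<Rightarrow> int"
    and eps phi :: "nat \<Rightarrow> 'b \<Rightarrow> int"
    and e f :: "nat \<Rightarrow> 'b \<Rightarrow> 'b option"
    and binf :: 'b
    and star :: "'b \<Rightarrow> 'b"
    and Psi :: "nat \<Rightarrow> 'b \<Rightarrow> 'b \<times> int"
    and bw :: "bool list"
    and js :: "nat list"
  assumes "n \<ge> 4"
    and "is_Binf_D n wt eps phi e f binf star Psi"
    and "bw = replicate (n - 1) True @ [False] \<or> bw = replicate n True"
    and "set js \<subseteq> {1..n}"
    and "spin_fseq n js bw \<noteq> None"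
  shows "map_option (Phi Psi js) (fstar_seq f star js binf) = Some (binf, replicate (length js) (-1))
       \<and> map_option (Phi Psi js) (f_seq f js binf) = Some (binf, replicate (length js) (-1))"
proof -
  interpret Binf_D n wt eps phi e f binf star Psi
    using assms(2) by unfold_locales
  have "length bw = n" using assms(1,3) by auto
  then have js: "minuscule_word n js"
    using minuscule_word_if_spin_fseq assms(1,4,5) by simp
  show ?thesis
    using fstar_seq_binf[OF assms(4)] f_seq_binf[OF assms(4)]
      Phi_star_f_word[OF assms(4) js] Phi_f_word[OF assms(4) js]
    by simp
qed

end
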